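(* Let $\mathcal{X},\mathcal{Y}$ be finite sets and $p(X,Y)$ a distribution on $\mathcal{X}\times\mathcal{Y}$ with fully supported marginals. Let $q\in C(\mathcal{X}\times\mathcal{Y},\mathcal{T})$ satisfy $D(q(T)\|\tilde q(T))=D(p(X,Y)\|p(X)p(Y))$, and define $q'\in C(\mathcal{X}\times\mathcal{Y},\mathcal{T})$ by $q'(t|x,y)=\sum_{j=1}^n q(t|\mathcal{T}^q_j)\,q(\mathcal{T}^q_j|x,y)$ for $(x,y)\in\mathcal{S}$ and $q'(t|x,y)=q(t|x,y)$ for $(x,y)\notin\mathcal{S}$. Then: (i) for $(x,y)\in\mathcal{S}$ and every $j$, $q(\mathcal{T}^q_j|x,y)=\delta_{(x,y)\in\mathcal{S}_j}$; (ii) $q'(T)=q(T)$; (iii) $\mathcal{T}^q_j=\mathcal{T}^{q'}_j$ for all $j$; (iv) $I_q(X,Y;T)\ge I_{q'}(X,Y;T)$, with equality if and only if $q=q'$.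
   Context: $\mathcal{T}:=\mathbb{N}$; $C(\mathcal{A},\mathcal{B})$ is the set of channels from $\mathcal{A}$ to $\mathcal{B}$. For a channel $r\in C(\mathcal{X}\times\mathcal{Y},\mathcal{T})$, $r(T)$ and $\tilde r(T)$ are the marginals on $\mathcal{T}$ of $p(x,y)r(t|x,y)$ and $p(x)p(y)r(t|x,y)$, and $I_r(X,Y;T)$ is the mutual information under $p(x,y)r(t|x,y)$; $D$ is KL divergence. For $A\subseteq\mathcal{T}$: $q(A)=\sum_{t\in A}q(t)$, $q(A|x,y)=\sum_{t\in A}q(t|x,y)$, $q(t|A)=\frac{q(t)}{q(A)}\delta_{t\in A}$. $\mathcal{S}=\operatorname{supp}p(X,Y)$; $(x,y)\sim(x',y')$ iff $\frac{p(x,y)}{p(x)p(y)}=\frac{p(x',y')}{p(x')p(y')}$, whose classes contained in $\mathcal{S}$ are $\mathcal{S}_1,\dots,\mathcal{S}_n$. For a channel $r$, $\mathcal{T}^r_j:=\{t\in\mathcal{T}:\exists(x,y)\in\mathcal{S}_j,\ r(t|x,y)>0\}$. *)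

theory Defs
  imports "HOL-Analysis.Analysis"
begin

definition kl_div :: "'i set \<Rightarrow> ('i \<Rightarrow> real) \<Rightarrow> ('i \<Rightarrow> real) \<Rightarrow> ereal" where
  "kl_div A P Q =
     (if \<exists>a\<in>A. P a > 0 \<and> Q a = 0 then PInfty
      else if (\<lambda>a. if P a = 0 then 0 else P a * ln (P a / Q a)) summable_on A
      then ereal (infsum (\<lambda>a. if P a = 0 then 0 else P a * ln (P a / Q a)) A)
      else PInfty)"

definition is_distr :: "'a set \<Rightarrow> 'b set \<Rightarrow> ('a \<Rightarrow> 'b \<Rightarrow> real) \<Rightarrow> bool" where
  "is_distr X Y p \<longleftrightarrow> (\<forall>x\<in>X. \<forall>y\<in>Y. p x y \<ge> 0) \<and> (\<Sum>(x,y)\<in>X \<times> Y. p x y) = 1"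

definition margX :: "'b set \<Rightarrow> ('a \<Rightarrow> 'b \<Rightarrow> real) \<Rightarrow> 'a \<Rightarrow> real" where
  "margX Y p x = (\<Sum>y\<in>Y. p x y)"

definition margY :: "'a set \<Rightarrow> ('a \<Rightarrow> 'b \<Rightarrow> real) \<Rightarrow> 'b \<Rightarrow> real" where
  "margY X p y = (\<Sum>x\<in>X. p x y)"

definition is_channel :: "'a set \<Rightarrow> 'b set \<Rightarrow> ('a \<Rightarrow> 'b \<Rightarrow> nat \<Rightarrow> real) \<Rightarrow> bool" where
  "is_channel X Y r \<longleftrightarrow> (\<forall>x\<in>X. \<forall>y\<in>Y. (\<forall>t. r x y t \<ge> 0) \<and> (r x y has_sum 1) UNIV)"

definition outT :: "'a set \<Rightarrow> 'b set \<Rightarrow> ('a \<Rightarrow> 'b \<Rightarrow> real) \<Rightarrow> ('a \<Rightarrow> 'b \<Rightarrow> nat \<Rightarrow> real) \<Rightarrow> nat \<Rightarrow> real" where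
  "outT X Y p r t = (\<Sum>(x,y)\<in>X \<times> Y. p x y * r x y t)"

text \<open>tilde r(T): marginal of p(x) p(y) r(t|x,y) on T.\<close>
definition outT_ind :: "'a set \<Rightarrow> 'b set \<Rightarrow> ('a \<Rightarrow> 'b \<Rightarrow> real) \<Rightarrow> ('a \<Rightarrow> 'b \<Rightarrow> nat \<Rightarrow> real) \<Rightarrow> nat \<Rightarrow> real" where
  "outT_ind X Y p r t = (\<Sum>(x,y)\<in>X \<times> Y. margX Y p x * margY X p y * r x y t)"

definition mutinf :: "'a set \<Rightarrow> 'b set \<Rightarrow> ('a \<Rightarrow> 'b \<Rightarrow> real) \<Rightarrow> ('a \<Rightarrow> 'b \<Rightarrow> nat \<Rightarrow> real) \<Rightarrow> ereal" where
  "mutinf X Y p r = kl_div ((X \<times> Y) \<times> UNIV)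
      (\<lambda>((x,y),t). p x y * r x y t) (\<lambda>((x,y),t). p x y * outT X Y p r t)"

definition dep_div :: "'a set \<Rightarrow> 'b set \<Rightarrow> ('a \<Rightarrow> 'b \<Rightarrow> real) \<Rightarrow> ereal" where
  "dep_div X Y p = kl_div (X \<times> Y) (\<lambda>(x,y). p x y) (\<lambda>(x,y). margX Y p x * margY X p y)"

definition supp :: "'a set \<Rightarrow> 'b set \<Rightarrow> ('a \<Rightarrow> 'b \<Rightarrow> real) \<Rightarrow> ('a \<times> 'b) set" where
  "supp X Y p = {(x,y). x \<in> X \<and> y \<in> Y \<and> p x y > 0}"

definition pmi_ratio :: "'a set \<Rightarrow> 'b set \<Rightarrow> ('a \<Rightarrow> 'b \<Rightarrow> real) \<Rightarrow> 'a \<Rightarrow> 'b \<Rightarrow> real" where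
  "pmi_ratio X Y p x y = p x y / (margX Y p x * margY X p y)"

definition supp_classes :: "'a set \<Rightarrow> 'b set \<Rightarrow> ('a \<Rightarrow> 'b \<Rightarrow> real) \<Rightarrow> ('a \<times> 'b) set set" where
  "supp_classes X Y p =
     (\<lambda>(x,y). {(x',y') \<in> supp X Y p. pmi_ratio X Y p x' y' = pmi_ratio X Y p x y}) ` supp X Y p"

definition Tset :: "('a \<Rightarrow> 'b \<Rightarrow> nat \<Rightarrow> real) \<Rightarrow> ('a \<times> 'b) set \<Rightarrow> nat set" where
  "Tset r C = {t. \<exists>(x,y)\<in>C. r x y t > 0}"

definition condT :: "'a set \<Rightarrow> 'b set \<Rightarrow> ('a \<Rightarrow> 'b \<Rightarrow> real) \<Rightarrow> ('a \<Rightarrow> 'b \<Rightarrow> nat \<Rightarrow> real) \<Rightarrow> nat set \<Rightarrow> nat \<Rightarrow> real" where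
  "condT X Y p r A t = (if t \<in> A then outT X Y p r t / infsum (outT X Y p r) A else 0)"

definition qprime :: "'a set \<Rightarrow> 'b set \<Rightarrow> ('a \<Rightarrow> 'b \<Rightarrow> real) \<Rightarrow> ('a \<Rightarrow> 'b \<Rightarrow> nat \<Rightarrow> real) \<Rightarrow> 'a \<Rightarrow> 'b \<Rightarrow> nat \<Rightarrow> real" where
  "qprime X Y p q x y t =
     (if (x,y) \<in> supp X Y p
      then (\<Sum>C\<in>supp_classes X Y p. condT X Y p q (Tset q C) t * infsum (q x y) (Tset q C))
      else q x y t)"

end

theory Submission
  imports Defs
begin

text \<open>Write r(x,y) = p(x,y) / (p(x) p(y)). The gap in the data processing inequality
  D(q(T) || q~(T)) <= D(p(X,Y) || p(X)p(Y)) is a sum over outputs t of nonnegative log-sum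
  defects, and the defect at t vanishes only if p(x,y) q~(t) = p(x) p(y) q(t) for every (x,y)
  reaching t. Under equality an output reached from a point of S therefore determines r there and
  is reached from no point outside S, so the sets T^q_j are pairwise disjoint and q(.|x,y) is
  concentrated on T^q_j for (x,y) in S_j; this is (i), and (ii) and (iii) follow. On T^q_j the
  channel q' equals q(t) / p(S_j), hence I_q' is the entropy of the class of (X,Y), and
  I_q - I_q' is the sum of p(x,y) D(q(.|x,y) || q'(.|x,y)), which is nonnegative and vanishes
  iff q = q' on S.\<close>

section \<open>Kullback-Leibler terms\<close>

definition kl_term :: "real \<Rightarrow> real \<Rightarrow> real" where
  "kl_term u v = (if u = 0 then 0 else u * ln (u / v))"

lemma kl_term_0 [simp]: "kl_term 0 v = 0"
  by (simp add: kl_term_def)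

lemma kl_term_self [simp]: "kl_term u u = 0"
  by (simp add: kl_term_def)

lemma kl_term_mult_left: "c \<noteq> 0 \<Longrightarrow> kl_term (c * u) (c * v) = c * kl_term u v"
  by (simp add: kl_term_def)

lemma kl_term_mult_right:
  assumes "0 < c" "0 \<le> u" "0 < v"
  shows "kl_term u (c * v) = kl_term u v - u * ln c"
proof (cases "u = 0")
  case False
  with assms have "ln (u / (c * v)) = ln (u / v) - ln c"
    by (simp add: ln_div ln_mult)
  with False show ?thesis
    by (simp add: kl_term_def right_diff_distrib)
qed simp

text \<open>The terms -u + v cancel when summed against two probability vectors, but they make every
  term nonnegative; this is what allows the infinite sums over outputs to be split.\<close>
definition gen_kl :: "real \<Rightarrow> real \<Rightarrow> real" where
  "gen_kl u v = kl_term u v - u + v"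

lemma gen_kl_nonneg_and_eq_0_iff:
  assumes "0 \<le> u" "0 \<le> v" "0 < u \<Longrightarrow> 0 < v"
  shows "0 \<le> gen_kl u v \<and> (gen_kl u v = 0 \<longleftrightarrow> u = v)"
proof (cases "u = 0")
  case True
  with assms show ?thesis by (simp add: gen_kl_def)
next
  case False
  with assms have "0 < u" "0 < v" by auto
  define z where "z = v / u"
  have "0 < z" using \<open>0 < u\<close> \<open>0 < v\<close> by (simp add: z_def)
  have "gen_kl u v = u * (z - 1 - ln z)"
    using \<open>0 < u\<close> \<open>0 < v\<close>
    by (simp add: gen_kl_def kl_term_def z_def ln_div algebra_simps)
  moreover have "0 \<le> z - 1 - ln z" and "z - 1 - ln z = 0 \<longleftrightarrow> z = 1"
    using ln_le_minus_one[OF \<open>0 < z\<close>] ln_eq_minus_one[OF \<open>0 < z\<close>] by auto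
  moreover have "z = 1 \<longleftrightarrow> u = v"
    using \<open>0 < u\<close> by (auto simp: z_def)
  ultimately show ?thesis
    using \<open>0 < u\<close> by simp
qed

lemma gen_kl_nonneg:
  "0 \<le> u \<Longrightarrow> 0 \<le> v \<Longrightarrow> (0 < u \<Longrightarrow> 0 < v) \<Longrightarrow> 0 \<le> gen_kl u v"
  using gen_kl_nonneg_and_eq_0_iff by blast

lemma gen_kl_eq_0_iff:
  "0 \<le> u \<Longrightarrow> 0 \<le> v \<Longrightarrow> (0 < u \<Longrightarrow> 0 < v) \<Longrightarrow> gen_kl u v = 0 \<longleftrightarrow> u = v"
  using gen_kl_nonneg_and_eq_0_iff by blast

lemma kl_term_mult_right_split:
  assumes "0 < m" "0 \<le> k" "0 < k'"
  shows "kl_term k (m * k') = - k' * ln m + gen_kl k k' + (1 - ln m) * (k - k')"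
  using kl_term_mult_right[OF assms] by (simp add: gen_kl_def algebra_simps)

lemma kl_div_altdef:
  "kl_div A P Q =
     (if \<exists>a\<in>A. 0 < P a \<and> Q a = 0 then \<infinity>
      else if (\<lambda>a. kl_term (P a) (Q a)) summable_on A
      then ereal (infsum (\<lambda>a. kl_term (P a) (Q a)) A)
      else \<infinity>)"
  by (simp add: kl_div_def kl_term_def)

lemma kl_div_neq_MInfty: "kl_div A P Q \<noteq> - \<infinity>"
  by (simp add: kl_div_altdef)

lemma kl_div_eq_ereal_iff:
  "kl_div A P Q = ereal I \<longleftrightarrow>
     (\<forall>a\<in>A. 0 < P a \<longrightarrow> Q a \<noteq> 0) \<and> ((\<lambda>a. kl_term (P a) (Q a)) has_sum I) A"
  unfolding kl_div_altdef has_sum_iff by auto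

lemma kl_div_cong:
  assumes "\<And>a. a \<in> A \<Longrightarrow> P a = P' a" "\<And>a. a \<in> A \<Longrightarrow> Q a = Q' a"
  shows "kl_div A P Q = kl_div A P' Q'"
proof -
  have "(\<lambda>a. kl_term (P a) (Q a)) summable_on A \<longleftrightarrow> (\<lambda>a. kl_term (P' a) (Q' a)) summable_on A"
    by (rule summable_on_cong) (simp add: assms)
  moreover have "infsum (\<lambda>a. kl_term (P a) (Q a)) A = infsum (\<lambda>a. kl_term (P' a) (Q' a)) A"
    by (rule infsum_cong) (simp add: assms)
  ultimately show ?thesis
    unfolding kl_div_altdef using assms by auto
qed

lemma has_sum_diff:
  fixes f g :: "'a \<Rightarrow> 'b::topological_ab_group_add"
  assumes "(f has_sum a) A" "(g has_sum b) A"
  shows "((\<lambda>x. f x - g x) has_sum (a - b)) A"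
  using has_sum_add[OF assms(1) has_sum_uminus[where f = g and a = "- b", THEN iffD2]] assms(2) by simp

lemma has_sum_sum:
  fixes f :: "'i \<Rightarrow> 'a \<Rightarrow> 'b::topological_comm_monoid_add"
  assumes "finite I" "\<And>i. i \<in> I \<Longrightarrow> (f i has_sum s i) A"
  shows "((\<lambda>x. \<Sum>i\<in>I. f i x) has_sum (\<Sum>i\<in>I. s i)) A"
  using assms by (induction I rule: finite_induct) (auto intro: has_sum_add)

lemma has_sum_Times_finite:
  fixes F :: "'i \<times> 'a \<Rightarrow> 'b::topological_comm_monoid_add"
  assumes "finite I" "\<And>i. i \<in> I \<Longrightarrow> ((\<lambda>t. F (i, t)) has_sum s i) B"
  shows "(F has_sum (\<Sum>i\<in>I. s i)) (I \<times> B)"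
proof -
  have "(F has_sum s i) ({i} \<times> B)" if "i \<in> I" for i
  proof -
    have "bij_betw (Pair i) B ({i} \<times> B)"
      by (auto simp: bij_betw_def inj_on_def)
    then show ?thesis
      using assms(2)[OF that] has_sum_reindex_bij_betw[of "Pair i" B "{i} \<times> B" F] by simp
  qed
  then have "(F has_sum (\<Sum>i\<in>I. s i)) (\<Union>i\<in>I. {i} \<times> B)"
    by (intro sum_has_sum assms(1)) auto
  then show ?thesis
    by (simp add: Sigma_def)
qed

lemma has_sum_Times_cong:
  assumes "\<And>a b. a \<in> A \<Longrightarrow> b \<in> B \<Longrightarrow> f (a, b) = g (a, b)"
  shows "(f has_sum S) (A \<times> B) \<longleftrightarrow> (g has_sum S) (A \<times> B)"
  using assms by (intro has_sum_cong) auto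

section \<open>Channels with a finite input set\<close>

locale finite_channel =
  fixes A :: "'a set" and K :: "'a \<Rightarrow> 'b \<Rightarrow> real"
  assumes finite_inputs: "finite A"
    and channel_nonneg: "a \<in> A \<Longrightarrow> 0 \<le> K a t"
    and channel_has_sum: "a \<in> A \<Longrightarrow> (K a has_sum 1) UNIV"
begin

definition push :: "('a \<Rightarrow> real) \<Rightarrow> 'b \<Rightarrow> real" where
  "push P t = (\<Sum>a\<in>A. P a * K a t)"

definition mutual_info :: "('a \<Rightarrow> real) \<Rightarrow> ereal" where
  "mutual_info P = kl_div (A \<times> UNIV) (\<lambda>(a, t). P a * K a t) (\<lambda>(a, t). P a * push P t)"

lemma mutual_info_neq_MInfty: "mutual_info P \<noteq> - \<infinity>"
  by (simp add: mutual_info_def kl_div_neq_MInfty)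

lemma push_has_sum: "(push P has_sum sum P A) UNIV"
proof -
  have "((\<lambda>t. \<Sum>a\<in>A. P a * K a t) has_sum (\<Sum>a\<in>A. P a * 1)) UNIV"
    by (intro has_sum_sum finite_inputs has_sum_cmult_right channel_has_sum)
  then show ?thesis
    by (simp add: push_def[abs_def])
qed

context
  fixes P :: "'a \<Rightarrow> real"
  assumes P_nonneg: "\<And>a. a \<in> A \<Longrightarrow> 0 \<le> P a"
begin

lemma push_nonneg: "0 \<le> push P t"
  unfolding push_def by (intro sum_nonneg mult_nonneg_nonneg P_nonneg channel_nonneg)

lemma mult_le_push: "a \<in> A \<Longrightarrow> P a * K a t \<le> push P t"
  unfolding push_def
  by (rule member_le_sum) (auto intro: mult_nonneg_nonneg P_nonneg channel_nonneg finite_inputs)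

lemma push_pos: "a \<in> A \<Longrightarrow> 0 < P a \<Longrightarrow> 0 < K a t \<Longrightarrow> 0 < push P t"
  using mult_le_push[of a t] mult_pos_pos[of "P a" "K a t"] by linarith

lemma push_eq_0_imp: "push P t = 0 \<Longrightarrow> a \<in> A \<Longrightarrow> P a = 0 \<or> K a t = 0"
  using push_pos[of a t] P_nonneg[of a] channel_nonneg[of a t] by (auto simp: order_le_less)

lemma mutual_info_eq_ereal_iff:
  "mutual_info P = ereal I \<longleftrightarrow>
     ((\<lambda>(a, t). kl_term (P a * K a t) (P a * push P t)) has_sum I) (A \<times> UNIV)"
proof -
  have "\<forall>(a, t)\<in>A \<times> UNIV. 0 < P a * K a t \<longrightarrow> P a * push P t \<noteq> 0"
    using push_pos by (fastforce simp: zero_less_mult_iff dest: P_nonneg)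
  then show ?thesis
    unfolding mutual_info_def kl_div_eq_ereal_iff by (simp add: case_prod_unfold)
qed

end

text \<open>The log-sum inequality at the output t with its defect made explicit: every summand on
  the right is nonnegative, and for K a t > 0 it vanishes iff P a / Q a equals the likelihood
  ratio R of the outputs.\<close>
lemma log_sum_defect:
  fixes t :: 'b
  assumes P: "\<And>a. a \<in> A \<Longrightarrow> 0 \<le> P a" and Q: "\<And>a. a \<in> A \<Longrightarrow> 0 < Q a"
  defines "R \<equiv> push P t / push Q t"
  shows "push (\<lambda>a. kl_term (P a) (Q a)) t - kl_term (push P t) (push Q t)
           = (\<Sum>a\<in>A. K a t * gen_kl (P a) (R * Q a))"
proof (cases "push P t = 0")
  case True
  then have "R = 0"
    by (simp add: R_def)
  have "kl_term (P a) (Q a) * K a t = 0 \<and> K a t * gen_kl (P a) (R * Q a) = 0" if "a \<in> A" for a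
    using push_eq_0_imp[of P, OF P True that] \<open>R = 0\<close> by (auto simp: gen_kl_def)
  then have "(\<Sum>a\<in>A. kl_term (P a) (Q a) * K a t) = 0" "(\<Sum>a\<in>A. K a t * gen_kl (P a) (R * Q a)) = 0"
    by (simp_all add: sum.neutral)
  with True show ?thesis
    unfolding push_def by simp
next
  case False
  then obtain a where a: "a \<in> A" "P a * K a t \<noteq> 0"
    unfolding push_def by (meson sum.neutral)
  then have "0 < K a t"
    using channel_nonneg[OF a(1)] by (simp add: order_less_le)
  then have "0 < push Q t"
    using push_pos[of Q a t] Q a(1) by (simp add: less_imp_le)
  moreover have "0 < push P t"
    using False push_nonneg[of P t, OF P] by (simp add: order_less_le)
  ultimately have "0 < R" and R_push: "R * push Q t = push P t"
    by (simp_all add: R_def)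
  have "K a t * gen_kl (P a) (R * Q a)
      = kl_term (P a) (Q a) * K a t - ln R * (P a * K a t) - P a * K a t + R * (Q a * K a t)"
    if "a \<in> A" for a
    using kl_term_mult_right[OF \<open>0 < R\<close> P[OF that] Q[OF that]]
    by (simp add: gen_kl_def right_diff_distrib distrib_left mult_ac)
  then have "(\<Sum>a\<in>A. K a t * gen_kl (P a) (R * Q a))
      = (\<Sum>a\<in>A. kl_term (P a) (Q a) * K a t - ln R * (P a * K a t) - P a * K a t + R * (Q a * K a t))"
    by (rule sum.cong[OF refl])
  also have "\<dots> = push (\<lambda>a. kl_term (P a) (Q a)) t - ln R * push P t - push P t + R * push Q t"
    unfolding push_def by (simp add: sum.distrib sum_subtractf sum_distrib_left)
  also have "\<dots> = push (\<lambda>a. kl_term (P a) (Q a)) t - kl_term (push P t) (push Q t)"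
    using False \<open>0 < push Q t\<close> by (simp add: R_push kl_term_def R_def)
  finally show ?thesis ..
qed

lemma scaled_output_ratio:
  assumes P: "\<And>a. a \<in> A \<Longrightarrow> 0 \<le> P a" and Q: "\<And>a. a \<in> A \<Longrightarrow> 0 < Q a"
    and a: "a \<in> A" "0 < K a t"
  shows "0 \<le> push P t / push Q t * Q a" and "0 < P a \<Longrightarrow> 0 < push P t / push Q t * Q a"
proof -
  have "0 < push Q t"
    using push_pos[of Q a t] Q a by (simp add: less_imp_le)
  then show "0 \<le> push P t / push Q t * Q a" "0 < P a \<Longrightarrow> 0 < push P t / push Q t * Q a"
    using push_nonneg[of P t, OF P] push_pos[of P a t, OF P a(1) _ a(2)] Q[OF a(1)] by simp_all
qed

lemma log_sum_defect_term_nonneg: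
  assumes P: "\<And>a. a \<in> A \<Longrightarrow> 0 \<le> P a" and Q: "\<And>a. a \<in> A \<Longrightarrow> 0 < Q a"
    and a: "a \<in> A"
  shows "0 \<le> K a t * gen_kl (P a) (push P t / push Q t * Q a)"
proof (cases "K a t = 0")
  case False
  with a channel_nonneg have "0 < K a t"
    by (simp add: order_less_le)
  then have "0 \<le> gen_kl (P a) (push P t / push Q t * Q a)"
    using scaled_output_ratio[OF P Q a] P[OF a] by (intro gen_kl_nonneg) auto
  with \<open>0 < K a t\<close> show ?thesis
    by simp
qed simp

theorem kl_div_push_eq_imp_proportional:
  assumes P: "\<And>a. a \<in> A \<Longrightarrow> 0 \<le> P a" and Q: "\<And>a. a \<in> A \<Longrightarrow> 0 < Q a"
    and eq: "kl_div UNIV (push P) (push Q) = kl_div A P Q"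
    and a: "a \<in> A" "0 < K a t"
  shows "P a * push Q t = Q a * push P t"
proof -
  define R where "R s = push P s / push Q s" for s
  define defect where "defect s = (\<Sum>b\<in>A. K b s * gen_kl (P b) (R s * Q b))" for s
  have defect_terms_nonneg: "0 \<le> K b s * gen_kl (P b) (R s * Q b)" if "b \<in> A" for b s
    using log_sum_defect_term_nonneg[OF P Q that] unfolding R_def .
  have "\<forall>a\<in>A. 0 < P a \<longrightarrow> Q a \<noteq> 0"
    using Q by force
  then have "kl_div A P Q = ereal (\<Sum>a\<in>A. kl_term (P a) (Q a))"
    using finite_inputs by (simp add: kl_div_eq_ereal_iff)
  with eq have "kl_div UNIV (push P) (push Q) = ereal (\<Sum>a\<in>A. kl_term (P a) (Q a))"
    by simp
  then have "((\<lambda>s. kl_term (push P s) (push Q s)) has_sum (\<Sum>a\<in>A. kl_term (P a) (Q a))) UNIV"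
    by (simp only: kl_div_eq_ereal_iff)
  from has_sum_diff[OF push_has_sum[of "\<lambda>a. kl_term (P a) (Q a)"] this]
  have "(defect has_sum 0) UNIV"
    unfolding defect_def R_def using log_sum_defect[of P Q, OF P Q] by simp
  then have "defect t = 0"
    by (rule nonneg_has_sum_le_0D) (auto simp: defect_def intro: sum_nonneg defect_terms_nonneg)
  then have "\<forall>b\<in>A. K b t * gen_kl (P b) (R t * Q b) = 0"
    unfolding defect_def using sum_nonneg_eq_0_iff[OF finite_inputs defect_terms_nonneg] by simp
  then have "K a t * gen_kl (P a) (R t * Q a) = 0"
    using a(1) ..
  with a(2) have "gen_kl (P a) (R t * Q a) = 0"
    by simp
  moreover have "0 \<le> R t * Q a" "0 < P a \<Longrightarrow> 0 < R t * Q a"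
    using scaled_output_ratio[OF P Q a] unfolding R_def by auto
  ultimately have "P a = R t * Q a"
    using gen_kl_eq_0_iff[of "P a" "R t * Q a"] P[OF a(1)] by simp
  moreover have "0 < push Q t"
    using push_pos[of Q a t] Q a by (simp add: less_imp_le)
  ultimately show ?thesis
    by (simp add: R_def)
qed

end

section \<open>Channels attaining equality in the data processing inequality\<close>

context
  fixes X :: "'a set" and Y :: "'b set" and r :: "'a \<Rightarrow> 'b \<Rightarrow> nat \<Rightarrow> real"
  assumes channel: "finite_channel (X \<times> Y) (case_prod r)"
begin

lemma outT_eq_push: "outT X Y p r = finite_channel.push (X \<times> Y) (case_prod r) (case_prod p)"
  unfolding finite_channel.push_def[OF channel] by (simp add: fun_eq_iff outT_def split_def)

lemma outT_ind_eq_push: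
  "outT_ind X Y p r = finite_channel.push (X \<times> Y) (case_prod r) (\<lambda>(x, y). margX Y p x * margY X p y)"
  unfolding finite_channel.push_def[OF channel] by (simp add: fun_eq_iff outT_ind_def split_def)

end

lemma mutinf_eq_mutual_info:
  assumes "finite_channel (X \<times> Y) (case_prod r)"
  shows "mutinf X Y p r = finite_channel.mutual_info (X \<times> Y) (case_prod r) (case_prod p)"
  unfolding finite_channel.mutual_info_def[OF assms] outT_eq_push[OF assms] mutinf_def
  by (simp add: split_def)

lemma mem_Tset_iff: "t \<in> Tset r C \<longleftrightarrow> (\<exists>a\<in>C. 0 < case_prod r a t)"
  by (auto simp: Tset_def split_def)

locale dpi_equality =
  fixes X :: "'a set" and Y :: "'b set" and p :: "'a \<Rightarrow> 'b \<Rightarrow> real"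
    and q :: "'a \<Rightarrow> 'b \<Rightarrow> nat \<Rightarrow> real"
  assumes finX: "finite X" and finY: "finite Y"
    and distr: "is_distr X Y p"
    and margX_pos: "\<forall>x\<in>X. margX Y p x > 0"
    and margY_pos: "\<forall>y\<in>Y. margY X p y > 0"
    and chan: "is_channel X Y q"
    and eqD: "kl_div UNIV (outT X Y p q) (outT_ind X Y p q) = dep_div X Y p"
begin

abbreviation "P \<equiv> case_prod p"
abbreviation "Q \<equiv> \<lambda>(x, y). margX Y p x * margY X p y"
abbreviation "K \<equiv> case_prod q"
abbreviation "K' \<equiv> case_prod (qprime X Y p q)"
abbreviation "S \<equiv> supp X Y p"
abbreviation "classes \<equiv> supp_classes X Y p"
abbreviation "ratio \<equiv> case_prod (pmi_ratio X Y p)"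

sublocale orig: finite_channel "X \<times> Y" K
  using finX finY chan by unfold_locales (auto simp: is_channel_def)

abbreviation "out \<equiv> orig.push P"

lemma P_nonneg: "a \<in> X \<times> Y \<Longrightarrow> 0 \<le> P a"
  using distr by (auto simp: is_distr_def)

lemma Q_pos: "a \<in> X \<times> Y \<Longrightarrow> 0 < Q a"
  using margX_pos margY_pos by auto

lemma ratio_eq: "ratio a = P a / Q a"
  by (simp add: pmi_ratio_def split_def)

lemma mem_supp_iff: "a \<in> S \<longleftrightarrow> a \<in> X \<times> Y \<and> 0 < P a"
  by (auto simp: supp_def)

lemma supp_subset: "S \<subseteq> X \<times> Y"
  by (auto simp: mem_supp_iff)

lemma eq_0_outside_supp: "a \<in> X \<times> Y \<Longrightarrow> a \<notin> S \<Longrightarrow> P a = 0"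
  using P_nonneg by (force simp: mem_supp_iff)

lemma out_pos: "a \<in> S \<Longrightarrow> 0 < K a t \<Longrightarrow> 0 < out t"
  using orig.push_pos[of P a t, OF P_nonneg] by (simp add: mem_supp_iff)

lemma channel_proportional: "a \<in> X \<times> Y \<Longrightarrow> 0 < K a t \<Longrightarrow> P a * orig.push Q t = Q a * out t"
  using eqD Q_pos P_nonneg
  by (intro orig.kl_div_push_eq_imp_proportional)
     (auto simp: outT_eq_push[OF orig.finite_channel_axioms]
        outT_ind_eq_push[OF orig.finite_channel_axioms] dep_div_def less_imp_le)

lemma same_ratio_if_common_output:
  assumes a: "a \<in> S" "0 < K a t" and b: "b \<in> X \<times> Y" "0 < K b t"
  shows "b \<in> S \<and> ratio b = ratio a"
proof -
  have "0 < orig.push Q t"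
    using orig.push_pos[of Q b t] Q_pos b by (simp add: less_imp_le)
  then have ratio_out: "ratio c = out t / orig.push Q t" if "c \<in> X \<times> Y" "0 < K c t" for c
    using channel_proportional[OF that] Q_pos[OF that(1)] by (simp add: ratio_eq field_simps)
  have "0 < ratio b"
    using ratio_out[OF b] out_pos[OF a] \<open>0 < orig.push Q t\<close> by simp
  then have "b \<in> S"
    using b(1) Q_pos[OF b(1)] by (simp add: mem_supp_iff ratio_eq zero_less_divide_iff)
  with ratio_out[OF b] ratio_out[of a] a supp_subset show ?thesis
    by auto
qed

definition class_of :: "'a \<times> 'b \<Rightarrow> ('a \<times> 'b) set" where
  "class_of a = {b \<in> S. ratio b = ratio a}"

definition mass :: "('a \<times> 'b) set \<Rightarrow> real" where
  "mass C = sum P C"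

lemma supp_classes_eq: "classes = class_of ` S"
  unfolding supp_classes_def class_of_def by (intro image_cong) (auto simp: split_def)

lemma class_of_in_classes: "a \<in> S \<Longrightarrow> class_of a \<in> classes"
  by (simp add: supp_classes_eq)

lemma class_of_subset: "class_of a \<subseteq> S"
  by (auto simp: class_of_def)

lemma self_in_class_of: "a \<in> S \<Longrightarrow> a \<in> class_of a"
  by (simp add: class_of_def)

lemma class_eq_class_of: "C \<in> classes \<Longrightarrow> a \<in> C \<Longrightarrow> C = class_of a"
  by (auto simp: supp_classes_eq class_of_def)

lemma mem_classes_iff: "C \<in> classes \<Longrightarrow> a \<in> S \<Longrightarrow> a \<in> C \<longleftrightarrow> C = class_of a"
  using class_eq_class_of self_in_class_of by blast

lemma finite_supp: "finite S"
  using finite_subset[OF supp_subset] finX finY by blast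

lemma finite_classes: "finite classes"
  using finite_supp by (simp add: supp_classes_eq)

lemma classes_subset: "C \<in> classes \<Longrightarrow> C \<subseteq> S"
  using class_of_subset by (auto simp: supp_classes_eq)

lemma mass_pos:
  assumes C: "C \<in> classes"
  shows "0 < mass C"
proof -
  obtain a where "a \<in> S" "C = class_of a"
    using C by (auto simp: supp_classes_eq)
  have "finite C"
    using finite_subset[OF classes_subset[OF C] finite_supp] .
  moreover have "C \<noteq> {}"
    using self_in_class_of \<open>a \<in> S\<close> \<open>C = class_of a\<close> by blast
  moreover have "0 < P b" if "b \<in> C" for b
    using that classes_subset[OF C] by (auto simp: mem_supp_iff)
  ultimately show ?thesis
    unfolding mass_def by (rule sum_pos)
qed

lemma sum_restrict_class:
  assumes "C \<in> classes"
  shows "(\<Sum>a\<in>X \<times> Y. if a \<in> C then P a else 0) = mass C"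
proof -
  have "X \<times> Y \<inter> C = C"
    using classes_subset[OF assms] supp_subset by blast
  then show ?thesis
    unfolding mass_def using orig.finite_inputs by (simp add: sum.inter_restrict[symmetric])
qed

lemma Tset_iff_class_of:
  assumes a: "a \<in> S" "0 < K a t" and C: "C \<in> classes"
  shows "t \<in> Tset q C \<longleftrightarrow> C = class_of a"
proof
  assume "t \<in> Tset q C"
  then obtain b where b: "b \<in> C" "0 < K b t"
    by (auto simp: mem_Tset_iff)
  then have "b \<in> S" "ratio b = ratio a"
    using same_ratio_if_common_output[OF a] classes_subset[OF C] supp_subset by auto
  then show "C = class_of a"
    using class_eq_class_of[OF C b(1)] by (simp add: class_of_def)
next
  assume "C = class_of a"
  then show "t \<in> Tset q C"
    unfolding mem_Tset_iff using a self_in_class_of[OF a(1)] by blast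
qed

lemma Tset_disjoint:
  assumes "C \<in> classes" "C' \<in> classes" "t \<in> Tset q C" "t \<in> Tset q C'"
  shows "C = C'"
proof -
  obtain a where a: "a \<in> C" "0 < K a t"
    using assms(3) by (auto simp: mem_Tset_iff)
  then have "a \<in> S"
    using classes_subset[OF assms(1)] by blast
  then show ?thesis
    using Tset_iff_class_of[OF _ a(2)] assms by blast
qed

lemma channel_eq_0_off_Tset:
  assumes "a \<in> S" "t \<notin> Tset q (class_of a)"
  shows "K a t = 0"
proof (rule ccontr)
  assume "K a t \<noteq> 0"
  then have "0 < K a t"
    using orig.channel_nonneg[of a t] assms(1) supp_subset by auto
  then show False
    using assms self_in_class_of by (auto simp: mem_Tset_iff)
qed

lemma channel_has_sum_Tset:
  assumes a: "a \<in> S" and C: "C \<in> classes"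
  shows "(K a has_sum (if a \<in> C then 1 else 0)) (Tset q C)"
proof (cases "a \<in> C")
  case True
  then have "C = class_of a"
    using class_eq_class_of[OF C] by simp
  then have "(K a has_sum 1) (Tset q C) \<longleftrightarrow> (K a has_sum 1) UNIV"
    using channel_eq_0_off_Tset[OF a] by (intro has_sum_cong_neutral) auto
  with True show ?thesis
    using orig.channel_has_sum a supp_subset by auto
next
  case False
  have "K a t = 0" if "t \<in> Tset q C" for t
  proof (rule ccontr)
    assume "K a t \<noteq> 0"
    then have "0 < K a t"
      using orig.channel_nonneg[of a t] a supp_subset by auto
    with False show False
      using Tset_iff_class_of[OF a(1) _ C] that mem_classes_iff[OF C a] by simp
  qed
  with False show ?thesis
    by (simp add: has_sum_0)
qed

lemma infsum_Tset:
  "a \<in> S \<Longrightarrow> C \<in> classes \<Longrightarrow> infsum (K a) (Tset q C) = (if a \<in> C then 1 else 0)"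
  using channel_has_sum_Tset by (rule infsumI)

lemma out_has_sum_Tset:
  assumes C: "C \<in> classes"
  shows "(out has_sum mass C) (Tset q C)"
proof -
  have "((\<lambda>t. P a * K a t) has_sum (if a \<in> C then P a else 0)) (Tset q C)" if "a \<in> X \<times> Y" for a
  proof (cases "a \<in> S")
    case True
    then show ?thesis
      using has_sum_cmult_right[OF channel_has_sum_Tset[OF True C], of "P a"]
      by (cases "a \<in> C") simp_all
  next
    case False
    then show ?thesis
      using eq_0_outside_supp[OF that] classes_subset[OF C] by auto
  qed
  then have "(out has_sum (\<Sum>a\<in>X \<times> Y. if a \<in> C then P a else 0)) (Tset q C)"
    unfolding orig.push_def[abs_def] by (intro has_sum_sum orig.finite_inputs)
  then show ?thesis
    using sum_restrict_class[OF C] by simp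
qed

lemma outT_eq_out: "outT X Y p q = out"
  using outT_eq_push[OF orig.finite_channel_axioms] .

lemma out_pos_on_Tset: "C \<in> classes \<Longrightarrow> t \<in> Tset q C \<Longrightarrow> 0 < out t"
  using classes_subset out_pos by (force simp: mem_Tset_iff)

lemma qprime_on_supp:
  assumes a: "a \<in> S"
  shows "K' a t = (if t \<in> Tset q (class_of a) then out t / mass (class_of a) else 0)"
proof -
  have class_a: "class_of a \<in> classes"
    using class_of_in_classes[OF a] .
  have "K' a t = (\<Sum>C\<in>classes. condT X Y p q (Tset q C) t * infsum (K a) (Tset q C))"
    using a by (simp add: qprime_def split_def)
  also have "\<dots> = (\<Sum>C\<in>classes. if class_of a = C then condT X Y p q (Tset q C) t else 0)"
    using infsum_Tset[OF a] mem_classes_iff[OF _ a] by (intro sum.cong) auto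
  also have "\<dots> = condT X Y p q (Tset q (class_of a)) t"
    using finite_classes class_a by simp
  also have "\<dots> = (if t \<in> Tset q (class_of a) then out t / mass (class_of a) else 0)"
    using infsumI[OF out_has_sum_Tset[OF class_a]] by (simp add: condT_def outT_eq_out)
  finally show ?thesis .
qed

lemma qprime_off_supp: "a \<notin> S \<Longrightarrow> K' a t = K a t"
  by (simp add: qprime_def split_def)

lemma qprime_on_Tset:
  assumes "a \<in> S" "t \<in> Tset q (class_of a)"
  shows "0 < K' a t" and "out t = mass (class_of a) * K' a t"
proof -
  have "0 < out t" "0 < mass (class_of a)"
    using out_pos_on_Tset assms(2) mass_pos class_of_in_classes[OF assms(1)] by auto
  then show "0 < K' a t" "out t = mass (class_of a) * K' a t"
    using qprime_on_supp[OF assms(1)] assms(2) by simp_all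
qed

lemma qprime_off_Tset: "a \<in> S \<Longrightarrow> t \<notin> Tset q (class_of a) \<Longrightarrow> K' a t = 0"
  using qprime_on_supp by simp

lemma qprime_has_sum:
  assumes a: "a \<in> X \<times> Y"
  shows "(K' a has_sum 1) UNIV"
proof (cases "a \<in> S")
  case True
  have class_a: "class_of a \<in> classes"
    using class_of_in_classes[OF True] .
  have "((\<lambda>t. out t / mass (class_of a)) has_sum 1) (Tset q (class_of a))"
    using has_sum_cmult_right[OF out_has_sum_Tset[OF class_a], of "1 / mass (class_of a)"]
      mass_pos[OF class_a]
    by simp
  then show ?thesis
    using qprime_on_supp[OF True]
    by (subst has_sum_cong_neutral[where g = "\<lambda>t. out t / mass (class_of a)"]) auto
next
  case False
  then have "K' a = K a"
    by (intro ext qprime_off_supp)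
  then show ?thesis
    using orig.channel_has_sum[OF a] by simp
qed

lemma qprime_nonneg:
  assumes a: "a \<in> X \<times> Y"
  shows "0 \<le> K' a t"
proof (cases "a \<in> S")
  case True
  then have "0 < mass (class_of a)"
    using mass_pos class_of_in_classes by blast
  then show ?thesis
    using qprime_on_supp[OF True, of t] orig.push_nonneg[of P t, OF P_nonneg] by simp
next
  case False
  then show ?thesis
    using qprime_off_supp orig.channel_nonneg[OF a] by simp
qed

sublocale coarse: finite_channel "X \<times> Y" K'
  using orig.finite_inputs qprime_nonneg qprime_has_sum by unfold_locales

lemma coarse_push_on_Tset:
  assumes C: "C \<in> classes" "t \<in> Tset q C"
  shows "coarse.push P t = out t"
proof -
  have "P a * K' a t = (if a \<in> C then P a else 0) * (out t / mass C)" if "a \<in> X \<times> Y" for a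
  proof (cases "a \<in> S")
    case True
    have "t \<in> Tset q (class_of a) \<longleftrightarrow> class_of a = C"
      using Tset_disjoint[OF class_of_in_classes[OF True] C(1) _ C(2)] C(2) True by auto
    then show ?thesis
      using qprime_on_supp[OF True, of t] mem_classes_iff[OF C(1) True] by auto
  next
    case False
    then show ?thesis
      using eq_0_outside_supp[OF that] classes_subset[OF C(1)] by auto
  qed
  then have "coarse.push P t = (\<Sum>a\<in>X \<times> Y. if a \<in> C then P a else 0) * (out t / mass C)"
    unfolding coarse.push_def sum_distrib_right by (rule sum.cong[OF refl])
  also have "\<dots> = mass C * (out t / mass C)"
    using sum_restrict_class[OF C(1)] by simp
  also have "\<dots> = out t"
    using mass_pos[OF C(1)] by simp
  finally show ?thesis .
qed

lemma coarse_push_off_Tsets: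
  assumes "\<forall>C\<in>classes. t \<notin> Tset q C"
  shows "coarse.push P t = 0" and "out t = 0"
proof -
  have "P a * K' a t = 0 \<and> P a * K a t = 0" if "a \<in> X \<times> Y" for a
  proof (cases "a \<in> S")
    case True
    then have "t \<notin> Tset q (class_of a)"
      using assms class_of_in_classes by blast
    then show ?thesis
      using qprime_off_Tset[OF True] channel_eq_0_off_Tset[OF True] by simp
  next
    case False
    then show ?thesis
      using eq_0_outside_supp[OF that] by simp
  qed
  then show "coarse.push P t = 0" "out t = 0"
    unfolding coarse.push_def orig.push_def by (simp_all add: sum.neutral)
qed

theorem push_qprime: "coarse.push P = out"
proof
  fix t
  show "coarse.push P t = out t"
    using coarse_push_on_Tset coarse_push_off_Tsets by (cases "\<exists>C\<in>classes. t \<in> Tset q C") auto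
qed

theorem Tset_qprime:
  assumes C: "C \<in> classes"
  shows "Tset q C = Tset (qprime X Y p q) C"
proof -
  have K'_C: "K' b t = (if t \<in> Tset q C then out t / mass C else 0)" if "b \<in> C" for b t
    using qprime_on_supp[of b t] class_eq_class_of[OF C that] classes_subset[OF C] that by auto
  show ?thesis
  proof (rule set_eqI, rule iffI)
    fix t
    assume t: "t \<in> Tset q C"
    then obtain b where "b \<in> C" "0 < K b t"
      unfolding mem_Tset_iff by blast
    moreover have "0 < out t / mass C"
      using out_pos_on_Tset[OF C t] mass_pos[OF C] by simp
    ultimately have "0 < K' b t"
      using K'_C t by simp
    with \<open>b \<in> C\<close> show "t \<in> Tset (qprime X Y p q) C"
      unfolding mem_Tset_iff by blast
  next
    fix t
    assume "t \<in> Tset (qprime X Y p q) C"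
    then obtain b where "b \<in> C" "0 < K' b t"
      unfolding mem_Tset_iff by blast
    then show "t \<in> Tset q C"
      using K'_C[of b t] by (auto split: if_splits)
  qed
qed

definition partition_entropy :: real where
  "partition_entropy = - (\<Sum>a\<in>X \<times> Y. P a * ln (mass (class_of a)))"

lemma qprime_cases:
  assumes "a \<in> X \<times> Y"
  obtains "P a = 0"
    | "K a t = 0" "K' a t = 0"
    | "P a \<noteq> 0" "0 < mass (class_of a)" "0 < K' a t" "out t = mass (class_of a) * K' a t"
  using assms eq_0_outside_supp channel_eq_0_off_Tset qprime_off_Tset qprime_on_Tset mass_pos
    class_of_in_classes
  by metis

lemma kl_term_coarse:
  assumes a: "a \<in> X \<times> Y"
  shows "kl_term (P a * K' a t) (P a * out t) = - P a * K' a t * ln (mass (class_of a))"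
  using qprime_cases[OF a, where t = t]
proof cases
  case 3
  then show ?thesis
    using kl_term_mult_right[of "mass (class_of a)" "K' a t" "K' a t"] by (simp add: kl_term_mult_left)
qed simp_all

lemma kl_term_split_coarse:
  assumes a: "a \<in> X \<times> Y"
  defines "m \<equiv> mass (class_of a)"
  shows "kl_term (P a * K a t) (P a * out t)
           = - P a * K' a t * ln m + P a * gen_kl (K a t) (K' a t) + P a * (1 - ln m) * (K a t - K' a t)"
  using qprime_cases[OF a, where t = t]
proof cases
  case 3
  then have "kl_term (P a * K a t) (P a * out t) = P a * kl_term (K a t) (m * K' a t)"
    by (simp add: m_def kl_term_mult_left)
  also have "\<dots> = P a * (- K' a t * ln m + gen_kl (K a t) (K' a t) + (1 - ln m) * (K a t - K' a t))"
    using 3 kl_term_mult_right_split[of m "K a t" "K' a t"] orig.channel_nonneg[OF a] by (simp add: m_def)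
  finally show ?thesis
    by (simp add: ring_distribs mult.assoc)
qed (simp_all add: gen_kl_def)

definition excess :: "('a \<times> 'b) \<times> nat \<Rightarrow> real" where
  "excess = (\<lambda>(a, t). P a * gen_kl (K a t) (K' a t))"

lemma qprime_pos_if_channel_pos: "a \<in> S \<Longrightarrow> 0 < K a t \<Longrightarrow> 0 < K' a t"
  using qprime_on_Tset(1) channel_eq_0_off_Tset by fastforce

lemma excess_nonneg:
  assumes "z \<in> (X \<times> Y) \<times> UNIV"
  shows "0 \<le> excess z"
proof -
  obtain a t where z: "z = (a, t)" and a: "a \<in> X \<times> Y"
    using assms by blast
  show ?thesis
  proof (cases "a \<in> S")
    case True
    then show ?thesis
      using P_nonneg[OF a] orig.channel_nonneg[OF a] coarse.channel_nonneg[OF a]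
        qprime_pos_if_channel_pos[OF True]
      by (simp add: z excess_def gen_kl_nonneg)
  next
    case False
    then show ?thesis
      using eq_0_outside_supp[OF a] by (simp add: z excess_def)
  qed
qed

lemma coarse_terms_has_sum:
  "((\<lambda>(a, t). - P a * K' a t * ln (mass (class_of a))) has_sum partition_entropy)
     ((X \<times> Y) \<times> UNIV)"
proof -
  have "((\<lambda>t. - P a * K' a t * ln (mass (class_of a))) has_sum (- P a * ln (mass (class_of a))))
          UNIV" if "a \<in> X \<times> Y" for a
    using has_sum_cmult_right[OF coarse.channel_has_sum[OF that], of "- P a * ln (mass (class_of a))"]
    by (simp add: mult_ac)
  then show ?thesis
    unfolding partition_entropy_def sum_negf[symmetric]
    by (intro has_sum_Times_finite orig.finite_inputs) simp
qed

lemma correction_terms_has_sum: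
  "((\<lambda>(a, t). P a * (1 - ln (mass (class_of a))) * (K a t - K' a t)) has_sum 0) ((X \<times> Y) \<times> UNIV)"
proof -
  have "((\<lambda>t. P a * (1 - ln (mass (class_of a))) * (K a t - K' a t)) has_sum 0) UNIV"
    if "a \<in> X \<times> Y" for a
    using has_sum_cmult_right[OF has_sum_diff[OF orig.channel_has_sum coarse.channel_has_sum],
        OF that that]
    by simp
  then have "((\<lambda>(a, t). P a * (1 - ln (mass (class_of a))) * (K a t - K' a t))
               has_sum (\<Sum>a\<in>X \<times> Y. 0)) ((X \<times> Y) \<times> UNIV)"
    by (intro has_sum_Times_finite orig.finite_inputs) simp
  then show ?thesis
    by simp
qed

theorem mutual_info_qprime: "coarse.mutual_info P = ereal partition_entropy"
proof -
  have "((\<lambda>(a, t). kl_term (P a * K' a t) (P a * coarse.push P t)) has_sum partition_entropy)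
          ((X \<times> Y) \<times> UNIV)"
    by (rule has_sum_Times_cong[THEN iffD1, OF _ coarse_terms_has_sum])
       (simp add: push_qprime kl_term_coarse)
  then show ?thesis
    by (simp add: coarse.mutual_info_eq_ereal_iff[of P, OF P_nonneg])
qed

lemma excess_has_sum:
  assumes "orig.mutual_info P = ereal I"
  shows "(excess has_sum (I - partition_entropy)) ((X \<times> Y) \<times> UNIV)"
proof -
  have "((\<lambda>(a, t). kl_term (P a * K a t) (P a * out t)) has_sum I) ((X \<times> Y) \<times> UNIV)"
    using assms orig.mutual_info_eq_ereal_iff[of P, OF P_nonneg] by simp
  from has_sum_diff[OF has_sum_diff[OF this coarse_terms_has_sum] correction_terms_has_sum]
  have "((\<lambda>z. (case z of (a, t) \<Rightarrow> kl_term (P a * K a t) (P a * out t))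
             - (case z of (a, t) \<Rightarrow> - P a * K' a t * ln (mass (class_of a)))
             - (case z of (a, t) \<Rightarrow> P a * (1 - ln (mass (class_of a))) * (K a t - K' a t)))
          has_sum (I - partition_entropy)) ((X \<times> Y) \<times> UNIV)"
    by (simp only: diff_zero)
  then show ?thesis
    by (rule has_sum_Times_cong[THEN iffD1, rotated]) (simp add: excess_def kl_term_split_coarse)
qed

theorem mutual_info_qprime_le: "coarse.mutual_info P \<le> orig.mutual_info P"
proof (cases "orig.mutual_info P")
  case (real I)
  have "0 \<le> I - partition_entropy"
    using excess_has_sum[OF real] excess_nonneg by (rule has_sum_nonneg)
  with real show ?thesis
    by (simp add: mutual_info_qprime)
next
  case MInf
  with orig.mutual_info_neq_MInfty[of P] show ?thesis
    by simp
qed simp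

theorem mutual_info_qprime_eq_iff:
  "orig.mutual_info P = coarse.mutual_info P \<longleftrightarrow> (\<forall>a\<in>X \<times> Y. \<forall>t. K a t = K' a t)"
proof
  assume "orig.mutual_info P = coarse.mutual_info P"
  then have "(excess has_sum 0) ((X \<times> Y) \<times> UNIV)"
    using excess_has_sum mutual_info_qprime by simp
  from nonneg_has_sum_le_0D[OF this order_refl excess_nonneg]
  have excess_0: "excess (a, t) = 0" if "a \<in> X \<times> Y" for a t
    using that by simp
  show "\<forall>a\<in>X \<times> Y. \<forall>t. K a t = K' a t"
  proof (intro ballI allI)
    fix a t
    assume a: "a \<in> X \<times> Y"
    show "K a t = K' a t"
    proof (cases "a \<in> S")
      case True
      then have "gen_kl (K a t) (K' a t) = 0"
        using excess_0[OF a] by (simp add: excess_def mem_supp_iff)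
      then show ?thesis
        using gen_kl_eq_0_iff orig.channel_nonneg[OF a] coarse.channel_nonneg[OF a]
          qprime_pos_if_channel_pos[OF True] by blast
    next
      case False
      then show ?thesis
        by (simp add: qprime_off_supp)
    qed
  qed
next
  assume "\<forall>a\<in>X \<times> Y. \<forall>t. K a t = K' a t"
  then show "orig.mutual_info P = coarse.mutual_info P"
    unfolding orig.mutual_info_def coarse.mutual_info_def push_qprime
    by (intro kl_div_cong) auto
qed

end

theorem lemma12:
  fixes X :: "'a set" and Y :: "'b set" and p :: "'a \<Rightarrow> 'b \<Rightarrow> real"
    and q :: "'a \<Rightarrow> 'b \<Rightarrow> nat \<Rightarrow> real"
  assumes finX: "finite X" and finY: "finite Y"
    and distr: "is_distr X Y p"
    and margX_pos: "\<forall>x\<in>X. margX Y p x > 0"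
    and margY_pos: "\<forall>y\<in>Y. margY X p y > 0"
    and chan: "is_channel X Y q"
    and eqD: "kl_div UNIV (outT X Y p q) (outT_ind X Y p q) = dep_div X Y p"
  shows "(\<forall>(x,y)\<in>supp X Y p. \<forall>C\<in>supp_classes X Y p.
            infsum (q x y) (Tset q C) = (if (x,y) \<in> C then 1 else 0))
       \<and> (\<forall>t. outT X Y p (qprime X Y p q) t = outT X Y p q t)
       \<and> (\<forall>C\<in>supp_classes X Y p. Tset q C = Tset (qprime X Y p q) C)
       \<and> mutinf X Y p q \<ge> mutinf X Y p (qprime X Y p q)
       \<and> (mutinf X Y p q = mutinf X Y p (qprime X Y p q) \<longleftrightarrow>
            (\<forall>x\<in>X. \<forall>y\<in>Y. \<forall>t. q x y t = qprime X Y p q x y t))"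
proof -
  interpret dpi_equality X Y p q
    using assms by unfold_locales
  have "mutinf X Y p q = orig.mutual_info P"
    using mutinf_eq_mutual_info[OF orig.finite_channel_axioms] .
  moreover have "mutinf X Y p (qprime X Y p q) = coarse.mutual_info P"
    using mutinf_eq_mutual_info[OF coarse.finite_channel_axioms] .
  moreover have "outT X Y p (qprime X Y p q) = outT X Y p q"
    using outT_eq_push[OF coarse.finite_channel_axioms] push_qprime outT_eq_out by simp
  ultimately show ?thesis
    using infsum_Tset Tset_qprime mutual_info_qprime_le mutual_info_qprime_eq_iff by auto
qed

end
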